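(* Assume $CA^\Delta$. Then there is a metric $d$ on $\omega_1$ such that the metric space $(\omega_1,d)$ has no uncountable monotone subspace.
   Context: For $c>0$, a metric space $(Y,d)$ is $c$-monotone if there is a linear order $\prec$ on $Y$ such that $d(x,y)\leq c\cdot d(x,z)$ whenever $x\prec y\prec z$; it is monotone if it is $c$-monotone for some $c>0$. $CA^\Delta$ is the statement: (i) for every $n\geq2$ and every good type $\tau$ with $n_k\geq n$ for all $k\geq1$ there is an $n$-$\Delta$-capturing construction scheme of type $\tau$ over $\omega_1$; (ii) for every good type $\tau$ with $\langle n_{k+1}\rangle_{k\in\omega}$ non-decreasing and unbounded there is a $\Delta$-capturing construction scheme of type $\tau$ over $\omega_1$. Definitions: a type is a sequence $\tau=\langle m_k,n_{k+1},r_{k+1}\rangle_{k\in\omega}$ of natural numbers with $m_0=1$ and, for all $k$, $n_{k+1}\geq2$, $m_k>r_{k+1}$, $m_{k+1}=r_{k+1}+(m_k-r_{k+1})n_{k+1}$; good if every $r$ equals $r_k$ for infinitely many $k\geq1$. $A<B$ means every element of $A$ is below every element of $B$; $D(a)$ is the $a$-th element of a finite set of ordinals $D$. A construction scheme of type $\tau$ over a set of ordinals $Y$ is a family $\mathcal{F}$ of nonempty finite subsets of $Y$, cofinal among finite subsets of $Y$ under $\subseteq$, each of size $m_k$ for some $k$, with $\mathcal{F}_k=\{F\in\mathcal{F}:|F|=m_k\}$ satisfying: (i) for $E,F\in\mathcal{F}_k$, $E\cap F$ is an initial segment of both; (ii) every $F\in\mathcal{F}_{k+1}$ equals $F_0\cup\dots\cup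 F_{n_{k+1}-1}$ with $F_i\in\mathcal{F}_k$ a $\Delta$-system with root $R(F)$, $|R(F)|=r_{k+1}$, $R(F)<F_0\setminus R(F)<\dots<F_{n_{k+1}-1}\setminus R(F)$. $\rho(\alpha,\beta)=\min\{k:\exists F\in\mathcal{F}_k\ \{\alpha,\beta\}\subseteq F\}$; $\lVert\alpha\rVert_k=|\{\xi<\alpha:\rho(\xi,\alpha)\leq k\}|$; $\Delta(\alpha,\beta)=\min\{k:\lVert\alpha\rVert_k\neq\lVert\beta\rVert_k\}$ ($\omega$ if none); for $k\geq1$, $\Xi_\alpha(k)=-1$ if $\alpha\in R(F)$, $=i$ if $\alpha\in F_i\setminus R(F)$, for any $F\in\mathcal{F}_k$ containing $\alpha$. A root-tail-tail $\Delta$-system is a sequence $\langle D_i\rangle_{i<n}$, $n\geq2$, of finite sets of ordinals of common size $m$ with pairwise intersections $R$, $R<D_i\setminus R$, $D_0\setminus R<\dots<D_{n-1}\setminus R$; $r=|R|$. It is $\Delta$-captured at level $l\geq1$ if $n\leq n_l$, (I) $\Xi_{D_i(a)}(l)=-1$ for $a<r$ and $=i$ for $a\geq r$ ($i<n$, $a<m$), and (II) $\Delta(D_i(a),D_j(a))=l$ for $i<j<n$, $r\leq a<m$. A scheme over $\omega_1$ is $n$-$\Delta$-capturing if for every uncountable family $\mathcal{S}$ of nonempty finite subsets of $\omega_1$ there are infinitely many $l$ for which some $n$ distinct members of $\mathcal{S}$, suitably enumerated, form a root-tail-tail $\Delta$-system $\Delta$-captured at level $l$; $\Delta$-capturing means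 $n$-$\Delta$-capturing for every $n\geq2$. *)

theory Defs
  imports Main "HOL-Library.Countable_Set" "HOL-Library.Extended_Nat"
begin

text \<open>omega_1 is modelled by an arbitrary well-ordered type which is uncountable
and all of whose proper initial segments are countable (such a type is
order-isomorphic to omega_1).\<close>

definition omega1_like :: "'a::wellorder itself \<Rightarrow> bool" where
  "omega1_like _ \<longleftrightarrow> \<not> countable (UNIV :: 'a set) \<and> (\<forall>x::'a. countable {y. y < x})"

definition set_less :: "'a::ord set \<Rightarrow> 'a set \<Rightarrow> bool" where
  "set_less A B \<longleftrightarrow> (\<forall>x\<in>A. \<forall>y\<in>B. x < y)"

text \<open>A type is given by three sequences m, n, r; n k and r k are only used for k >= 1.\<close>

definition is_type :: "(nat \<Rightarrow> nat) \<Rightarrow> (nat \<Rightarrow> nat) \<Rightarrow> (nat \<Rightarrow> nat) \<Rightarrow> bool" where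
  "is_type m n r \<longleftrightarrow> m 0 = 1 \<and>
     (\<forall>k. n (Suc k) \<ge> 2 \<and> m k > r (Suc k) \<and>
          m (Suc k) = r (Suc k) + (m k - r (Suc k)) * n (Suc k))"

definition good_type :: "(nat \<Rightarrow> nat) \<Rightarrow> (nat \<Rightarrow> nat) \<Rightarrow> (nat \<Rightarrow> nat) \<Rightarrow> bool" where
  "good_type m n r \<longleftrightarrow> is_type m n r \<and> (\<forall>x. infinite {k. k \<ge> 1 \<and> r k = x})"

definition level :: "'a set set \<Rightarrow> (nat \<Rightarrow> nat) \<Rightarrow> nat \<Rightarrow> 'a set set" where
  "level FF m k = {F \<in> FF. card F = m k}"

definition is_decomp ::
  "(nat \<Rightarrow> nat) \<Rightarrow> (nat \<Rightarrow> nat) \<Rightarrow> (nat \<Rightarrow> nat) \<Rightarrow> 'a::linorder set set \<Rightarrow> nat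
     \<Rightarrow> 'a set \<Rightarrow> (nat \<Rightarrow> 'a set) \<Rightarrow> 'a set \<Rightarrow> bool" where
  "is_decomp m n r FF k F Fs R \<longleftrightarrow>
     (\<forall>i < n (Suc k). Fs i \<in> level FF m k) \<and>
     F = (\<Union>i < n (Suc k). Fs i) \<and>
     (\<forall>i < n (Suc k). \<forall>j < n (Suc k). i \<noteq> j \<longrightarrow> Fs i \<inter> Fs j = R) \<and>
     card R = r (Suc k) \<and>
     (\<forall>i < n (Suc k). set_less R (Fs i - R)) \<and>
     (\<forall>i j. i < j \<and> j < n (Suc k) \<longrightarrow> set_less (Fs i - R) (Fs j - R))"

definition init_seg_of :: "'a::ord set \<Rightarrow> 'a set \<Rightarrow> bool" where
  "init_seg_of A E \<longleftrightarrow> A \<subseteq> E \<and> (\<forall>x\<in>A. \<forall>y\<in>E. y < x \<longrightarrow> y \<in> A)"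

definition construction_scheme ::
  "(nat \<Rightarrow> nat) \<Rightarrow> (nat \<Rightarrow> nat) \<Rightarrow> (nat \<Rightarrow> nat) \<Rightarrow> 'a::linorder set \<Rightarrow> 'a set set \<Rightarrow> bool" where
  "construction_scheme m n r Y FF \<longleftrightarrow>
     (\<forall>F\<in>FF. F \<noteq> {} \<and> finite F \<and> F \<subseteq> Y \<and> (\<exists>k. card F = m k)) \<and>
     (\<forall>A. finite A \<and> A \<subseteq> Y \<longrightarrow> (\<exists>F\<in>FF. A \<subseteq> F)) \<and>
     (\<forall>k. \<forall>E\<in>level FF m k. \<forall>F\<in>level FF m k.
         init_seg_of (E \<inter> F) E \<and> init_seg_of (E \<inter> F) F) \<and>
     (\<forall>k. \<forall>F\<in>level FF m (Suc k). \<exists>Fs R. is_decomp m n r FF k F Fs R)"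

definition rho :: "'a set set \<Rightarrow> (nat \<Rightarrow> nat) \<Rightarrow> 'a \<Rightarrow> 'a \<Rightarrow> nat" where
  "rho FF m \<alpha> \<beta> = (LEAST k. \<exists>F\<in>level FF m k. {\<alpha>, \<beta>} \<subseteq> F)"

definition knorm :: "'a::ord set set \<Rightarrow> (nat \<Rightarrow> nat) \<Rightarrow> 'a \<Rightarrow> nat \<Rightarrow> nat" where
  "knorm FF m \<alpha> k = card {\<xi>. \<xi> < \<alpha> \<and> rho FF m \<xi> \<alpha> \<le> k}"

definition Delta :: "'a::ord set set \<Rightarrow> (nat \<Rightarrow> nat) \<Rightarrow> 'a \<Rightarrow> 'a \<Rightarrow> enat" where
  "Delta FF m \<alpha> \<beta> =
     (if \<exists>k. knorm FF m \<alpha> k \<noteq> knorm FF m \<beta> k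
      then enat (LEAST k. knorm FF m \<alpha> k \<noteq> knorm FF m \<beta> k) else \<infinity>)"

text \<open>Xi_alpha(k) for k >= 1, computed from some F in level k containing alpha
  (the paper shows the value does not depend on F).\<close>
definition Xi ::
  "(nat \<Rightarrow> nat) \<Rightarrow> (nat \<Rightarrow> nat) \<Rightarrow> (nat \<Rightarrow> nat) \<Rightarrow> 'a::linorder set set \<Rightarrow> nat \<Rightarrow> 'a \<Rightarrow> int" where
  "Xi m n r FF k \<alpha> = (SOME x. \<exists>F\<in>level FF m k. \<alpha> \<in> F \<and>
      (\<exists>Fs R. is_decomp m n r FF (k - 1) F Fs R \<and>
         ((\<alpha> \<in> R \<and> x = -1) \<or> (\<exists>i < n k. \<alpha> \<in> Fs i - R \<and> x = int i))))"

definition nth_elem :: "'a::linorder set \<Rightarrow> nat \<Rightarrow> 'a" where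
  "nth_elem D a = sorted_list_of_set D ! a"

definition rtt_system :: "nat \<Rightarrow> (nat \<Rightarrow> 'a::linorder set) \<Rightarrow> bool" where
  "rtt_system nn D \<longleftrightarrow> nn \<ge> 2 \<and>
     (\<exists>R. (\<forall>i < nn. finite (D i) \<and> card (D i) = card (D 0)) \<and>
          (\<forall>i < nn. \<forall>j < nn. i \<noteq> j \<longrightarrow> D i \<inter> D j = R) \<and>
          (\<forall>i < nn. set_less R (D i - R)) \<and>
          (\<forall>i j. i < j \<and> j < nn \<longrightarrow> set_less (D i - R) (D j - R)))"

text \<open>For a root-tail-tail system, m = card (D 0) and the root is D 0 \<inter> D 1.\<close>
definition delta_captured ::
  "(nat \<Rightarrow> nat) \<Rightarrow> (nat \<Rightarrow> nat) \<Rightarrow> (nat \<Rightarrow> nat) \<Rightarrow> 'a::linorder set set \<Rightarrow> nat \<Rightarrow> nat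
     \<Rightarrow> (nat \<Rightarrow> 'a set) \<Rightarrow> bool" where
  "delta_captured m n r FF l nn D \<longleftrightarrow> l \<ge> 1 \<and> nn \<le> n l \<and>
     (let mm = card (D 0); rr = card (D 0 \<inter> D 1) in
       (\<forall>i < nn. \<forall>a < mm. Xi m n r FF l (nth_elem (D i) a) = (if a < rr then -1 else int i)) \<and>
       (\<forall>i j a. i < j \<and> j < nn \<and> rr \<le> a \<and> a < mm \<longrightarrow>
           Delta FF m (nth_elem (D i) a) (nth_elem (D j) a) = enat l))"

definition n_capturing ::
  "(nat \<Rightarrow> nat) \<Rightarrow> (nat \<Rightarrow> nat) \<Rightarrow> (nat \<Rightarrow> nat) \<Rightarrow> 'a::linorder set set \<Rightarrow> nat \<Rightarrow> bool" where
  "n_capturing m n r FF nn \<longleftrightarrow>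
     (\<forall>S. S \<subseteq> {A. A \<noteq> {} \<and> finite A} \<and> \<not> countable S \<longrightarrow>
        infinite {l. \<exists>D. inj_on D {..<nn} \<and> (\<forall>i < nn. D i \<in> S) \<and>
                         rtt_system nn D \<and> delta_captured m n r FF l nn D})"

definition capturing ::
  "(nat \<Rightarrow> nat) \<Rightarrow> (nat \<Rightarrow> nat) \<Rightarrow> (nat \<Rightarrow> nat) \<Rightarrow> 'a::linorder set set \<Rightarrow> bool" where
  "capturing m n r FF \<longleftrightarrow> (\<forall>nn \<ge> 2. n_capturing m n r FF nn)"

definition CA_Delta :: "'a::wellorder itself \<Rightarrow> bool" where
  "CA_Delta _ \<longleftrightarrow>
     (\<forall>nn \<ge> 2. \<forall>m n r. good_type m n r \<and> (\<forall>k \<ge> 1. n k \<ge> nn) \<longrightarrow>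
        (\<exists>FF :: 'a set set. construction_scheme m n r UNIV FF \<and> n_capturing m n r FF nn)) \<and>
     (\<forall>m n r. good_type m n r \<and> mono (\<lambda>k. n (Suc k)) \<and> (\<forall>b. \<exists>k. n (Suc k) > b) \<longrightarrow>
        (\<exists>FF :: 'a set set. construction_scheme m n r UNIV FF \<and> capturing m n r FF))"

definition is_metric :: "('a \<Rightarrow> 'a \<Rightarrow> real) \<Rightarrow> bool" where
  "is_metric d \<longleftrightarrow> (\<forall>x y. d x y \<ge> 0 \<and> (d x y = 0 \<longleftrightarrow> x = y) \<and> d x y = d y x) \<and>
     (\<forall>x y z. d x z \<le> d x y + d y z)"

definition c_monotone :: "('a \<Rightarrow> 'a \<Rightarrow> real) \<Rightarrow> real \<Rightarrow> 'a set \<Rightarrow> bool" where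
  "c_monotone d c Y \<longleftrightarrow> (\<exists>ord. linear_order_on Y ord \<and>
     (\<forall>x\<in>Y. \<forall>y\<in>Y. \<forall>z\<in>Y. (x, y) \<in> ord \<and> x \<noteq> y \<and> (y, z) \<in> ord \<and> y \<noteq> z \<longrightarrow>
        d x y \<le> c * d x z))"

definition monotone_space :: "('a \<Rightarrow> 'a \<Rightarrow> real) \<Rightarrow> 'a set \<Rightarrow> bool" where
  "monotone_space d Y \<longleftrightarrow> (\<exists>c > 0. c_monotone d c Y)"

end

theory Submission
  imports Defs "HOL-Library.Nat_Bijection"
begin

text \<open>
  Every point \<open>\<alpha>\<close> determines its sequence of norms \<open>k \<mapsto> \<parallel>\<alpha>\<parallel>\<^sub>k\<close>, and distinct
  points have distinct sequences. Two sequences that first differ at level \<open>l\<close> are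
  put at distance \<open>1/(l+1)!\<close> times a factor in \<open>[1, l+1]\<close> that depends only on the
  level-\<open>l\<close> blocks containing the two points; since \<open>(l+1)/(l+1)! \<le> 1/l!\<close>, the
  triangle inequality reduces to the one for these factors. The block with index
  \<open>prod_encode (a, t)\<close> is the point \<open>t\<close> of a cycle of length \<open>a + 1\<close>, and the factor
  is the cyclic distance, floored at 1 and capped at \<open>l + 1\<close>.

  If an uncountable \<open>Y\<close> were \<open>c\<close>-monotone, pick \<open>A > c\<close>. Capturing the singletons of
  \<open>Y\<close> at a level \<open>l \<ge> A\<close> gives points \<open>P t \<in> Y\<close>, \<open>t < 3A\<close>, whose mutual distances are
  \<open>1/(l+1)!\<close> times the cyclic distance on a cycle of length \<open>3A\<close> (floored at 1,
  capped at \<open>l + 1 > c\<close>). In a \<open>c\<close>-monotone order no point lies between two consecutive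
  points of a unit-step path that stays more than \<open>c\<close> units away from it. The arc
  between any two of \<open>P 0\<close>, \<open>P A\<close>, \<open>P (2A)\<close> avoiding the third stays \<open>A > c\<close> units
  away from it, so none of the three lies between the other two, which is
  impossible in a linear order.
\<close>

section \<open>Construction schemes\<close>

lemma levelD: "F \<in> level FF m k \<Longrightarrow> F \<in> FF \<and> card F = m k"
  by (simp add: level_def)

lemma construction_scheme_member:
  assumes "construction_scheme m n r Y FF" "F \<in> FF"
  shows "finite F \<and> (\<exists>k. F \<in> level FF m k)"
  using assms unfolding construction_scheme_def level_def by blast

lemma construction_scheme_cofinal:
  assumes "construction_scheme m n r Y FF" "finite A" "A \<subseteq> Y"
  shows "\<exists>k. \<exists>F\<in>level FF m k. A \<subseteq> F"
proof -
  obtain F where "F \<in> FF" "A \<subseteq> F" using assms unfolding construction_scheme_def by blast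
  then show ?thesis using construction_scheme_member[OF assms(1)] by blast
qed

lemma construction_scheme_decomp:
  assumes "construction_scheme m n r Y FF" "F \<in> level FF m (Suc k)"
  obtains Fs R where "is_decomp m n r FF k F Fs R"
  using assms unfolding construction_scheme_def by meson

lemma construction_scheme_level_finite:
  assumes "construction_scheme m n r Y FF" "F \<in> level FF m k"
  shows "finite F"
  using construction_scheme_member[OF assms(1)] levelD[OF assms(2)] by blast

lemma is_decompD:
  assumes "is_decomp m n r FF k F Fs R"
  shows "i < n (Suc k) \<Longrightarrow> Fs i \<in> level FF m k"
    and "F = (\<Union>i < n (Suc k). Fs i)"
    and "i < n (Suc k) \<Longrightarrow> j < n (Suc k) \<Longrightarrow> i \<noteq> j \<Longrightarrow> Fs i \<inter> Fs j = R"
    and "card R = r (Suc k)"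
    and "i < n (Suc k) \<Longrightarrow> set_less R (Fs i - R)"
    and "i < j \<Longrightarrow> j < n (Suc k) \<Longrightarrow> set_less (Fs i - R) (Fs j - R)"
  using assms unfolding is_decomp_def by simp_all

lemma init_seg_of_UN: "(\<And>i. i \<in> I \<Longrightarrow> init_seg_of (A i) E) \<Longrightarrow> init_seg_of (\<Union>i\<in>I. A i) E"
  unfolding init_seg_of_def by blast

lemma construction_scheme_init_seg:
  assumes cs: "construction_scheme m n r Y FF" and "j \<le> k"
    and E: "E \<in> level FF m j" and "F \<in> level FF m k"
  shows "init_seg_of (E \<inter> F) E"
  using \<open>j \<le> k\<close> \<open>F \<in> level FF m k\<close>
proof (induction k arbitrary: F rule: dec_induct)
  case base
  then show ?case using cs E unfolding construction_scheme_def by blast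
next
  case (step k)
  obtain Fs R where d: "is_decomp m n r FF k F Fs R"
    using construction_scheme_decomp[OF cs step.prems] .
  have "init_seg_of (\<Union>i < n (Suc k). E \<inter> Fs i) E"
    using step.IH is_decompD(1)[OF d] by (intro init_seg_of_UN) blast
  moreover have "E \<inter> F = (\<Union>i < n (Suc k). E \<inter> Fs i)"
    using is_decompD(2)[OF d] by blast
  ultimately show ?case by simp
qed

lemma construction_scheme_level_down:
  assumes cs: "construction_scheme m n r Y FF" and "k \<le> k'" "F \<in> level FF m k'" "\<alpha> \<in> F"
  shows "\<exists>F'\<in>level FF m k. \<alpha> \<in> F'"
  using assms(2-4)
proof (induction k' arbitrary: F rule: dec_induct)
  case base
  then show ?case by blast
next
  case (step k')
  obtain Fs R where d: "is_decomp m n r FF k' F Fs R"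
    using construction_scheme_decomp[OF cs step.prems(1)] .
  then obtain i where "i < n (Suc k')" "\<alpha> \<in> Fs i"
    using step.prems(2) is_decompD(2)[OF d] by blast
  then show ?case using step.IH is_decompD(1)[OF d] by blast
qed

lemma is_type_strict_mono:
  assumes "is_type m n r" shows "strict_mono m"
proof (rule strict_mono_Suc_iff[THEN iffD2, rule_format])
  fix k
  have "n (Suc k) \<ge> 2" "m k > r (Suc k)" "m (Suc k) = r (Suc k) + (m k - r (Suc k)) * n (Suc k)"
    using assms unfolding is_type_def by auto
  moreover have "(m k - r (Suc k)) * n (Suc k) \<ge> (m k - r (Suc k)) * 2"
    using calculation by (intro mult_le_mono2) auto
  ultimately show "m k < m (Suc k)" by linarith
qed

lemma decomp_root_subset:
  assumes d: "is_decomp m n r FF k F Fs R" and "n (Suc k) \<ge> 2" and j: "j < n (Suc k)"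
  shows "R \<subseteq> Fs j"
proof -
  define j' :: nat where "j' = (if j = 0 then 1 else 0)"
  have "j' < n (Suc k)" "j' \<noteq> j" using assms j'_def by auto
  then show ?thesis using is_decompD(3)[OF d j] by blast
qed

lemma decomp_below_eq:
  assumes d: "is_decomp m n r FF k F Fs R" and "n (Suc k) \<ge> 2"
    and i: "i < n (Suc k)" "\<alpha> \<in> Fs i - R"
  shows "{\<xi>\<in>F. \<xi> < \<alpha>} = {\<xi>\<in>Fs i. \<xi> < \<alpha>} \<union> (\<Union>j<i. Fs j - R)"
proof -
  note F = is_decompD(2)[OF d] and ord = is_decompD(6)[OF d]
  have R: "R \<subseteq> Fs i" using decomp_root_subset[OF d \<open>n (Suc k) \<ge> 2\<close> i(1)] .
  show ?thesis
  proof (intro set_eqI iffI)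
    fix \<xi> assume "\<xi> \<in> {\<xi>\<in>F. \<xi> < \<alpha>}"
    then obtain j where j: "j < n (Suc k)" "\<xi> \<in> Fs j" "\<xi> < \<alpha>" using F by auto
    have "\<not> i < j \<or> \<xi> \<in> R"
      using ord[of i j] j i unfolding set_less_def by (meson DiffI not_less_iff_gr_or_eq)
    then show "\<xi> \<in> {\<xi>\<in>Fs i. \<xi> < \<alpha>} \<union> (\<Union>j<i. Fs j - R)"
      using j R by (cases "j = i") auto
  next
    fix \<xi> assume "\<xi> \<in> {\<xi>\<in>Fs i. \<xi> < \<alpha>} \<union> (\<Union>j<i. Fs j - R)"
    moreover have "\<xi> < \<alpha>" if "j < i" "\<xi> \<in> Fs j - R" for j
      using ord[OF that(1) i(1)] that i unfolding set_less_def by blast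
    ultimately show "\<xi> \<in> {\<xi>\<in>F. \<xi> < \<alpha>}" using F i(1) by auto
  qed
qed

lemma decomp_card_below:
  assumes cs: "construction_scheme m n r Y FF" and d: "is_decomp m n r FF k F Fs R"
    and n2: "n (Suc k) \<ge> 2" and i: "i < n (Suc k)" "\<alpha> \<in> Fs i - R"
  shows "card {\<xi>\<in>F. \<xi> < \<alpha>} = card {\<xi>\<in>Fs i. \<xi> < \<alpha>} + i * (m k - r (Suc k))"
proof -
  note level = is_decompD(1)[OF d] and Fint = is_decompD(3)[OF d] and cR = is_decompD(4)[OF d]
  have fin: "finite (Fs j)" if "j < n (Suc k)" for j
    using construction_scheme_level_finite[OF cs level[OF that]] .
  have card_block: "card (Fs j - R) = m k - r (Suc k)" if j: "j < n (Suc k)" for j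
  proof -
    have "R \<subseteq> Fs j" using decomp_root_subset[OF d n2 j] .
    then have "card (Fs j - R) = card (Fs j) - card R"
      using fin[OF j] by (meson card_Diff_subset finite_subset)
    then show ?thesis using levelD[OF level[OF j]] cR by simp
  qed
  have "card (\<Union>j<i. Fs j - R) = (\<Sum>j<i. card (Fs j - R))"
  proof (rule card_UN_disjoint)
    show "\<forall>j\<in>{..<i}. \<forall>j'\<in>{..<i}. j \<noteq> j' \<longrightarrow> (Fs j - R) \<inter> (Fs j' - R) = {}"
    proof (intro ballI impI)
      fix j j' assume "j \<in> {..<i}" "j' \<in> {..<i}" "j \<noteq> j'"
      then have "Fs j \<inter> Fs j' = R" using Fint i(1) by simp
      then show "(Fs j - R) \<inter> (Fs j' - R) = {}" by blast
    qed
  qed (use fin i(1) in auto)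
  also have "\<dots> = i * (m k - r (Suc k))" using card_block i(1) by simp
  finally have card_U: "card (\<Union>j<i. Fs j - R) = i * (m k - r (Suc k))" .
  have "{\<xi>\<in>Fs i. \<xi> < \<alpha>} \<inter> (Fs j - R) = {}" if "j < i" for j
    using Fint[of j i] that i(1) by auto
  then have "{\<xi>\<in>Fs i. \<xi> < \<alpha>} \<inter> (\<Union>j<i. Fs j - R) = {}" by blast
  then show ?thesis
    using decomp_below_eq[OF d n2 i] card_U fin i(1) by (simp add: card_Un_disjoint)
qed

text \<open>In a level-\<open>k\<close> set with root size \<open>r k\<close> and blocks of size \<open>m (k - 1) - r k\<close>,
  a non-root element at position \<open>p\<close> lies in block number \<open>block_index m r k p\<close>.\<close>
definition block_index :: "(nat \<Rightarrow> nat) \<Rightarrow> (nat \<Rightarrow> nat) \<Rightarrow> nat \<Rightarrow> nat \<Rightarrow> nat" where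
  "block_index m r k p = (p - r k) div (m (k - 1) - r k)"

locale infinite_construction_scheme =
  fixes m n r :: "nat \<Rightarrow> nat" and FF :: "'a::linorder set set"
  assumes scheme: "construction_scheme m n r UNIV FF"
    and type: "is_type m n r"
    and infinite_UNIV: "infinite (UNIV :: 'a set)"
begin

lemma pair_in_level: "\<exists>k. \<exists>F\<in>level FF m k. {\<alpha>, \<beta>} \<subseteq> F"
  using construction_scheme_cofinal[OF scheme, of "{\<alpha>, \<beta>}"] by auto

lemma knorm_eq_card_below:
  assumes F: "F \<in> level FF m k" and "\<alpha> \<in> F"
  shows "knorm FF m \<alpha> k = card {\<xi>\<in>F. \<xi> < \<alpha>}"
proof -
  have "rho FF m \<xi> \<alpha> \<le> k \<longleftrightarrow> \<xi> \<in> F" if "\<xi> < \<alpha>" for \<xi>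
  proof
    assume rho: "rho FF m \<xi> \<alpha> \<le> k"
    obtain E where E: "E \<in> level FF m (rho FF m \<xi> \<alpha>)" "{\<xi>, \<alpha>} \<subseteq> E"
      using LeastI_ex[OF pair_in_level] unfolding rho_def by blast
    have "init_seg_of (E \<inter> F) E" using construction_scheme_init_seg[OF scheme rho E(1) F] .
    then show "\<xi> \<in> F" using E(2) \<open>\<alpha> \<in> F\<close> that unfolding init_seg_of_def by blast
  next
    assume "\<xi> \<in> F"
    then show "rho FF m \<xi> \<alpha> \<le> k" unfolding rho_def using F \<open>\<alpha> \<in> F\<close> by (intro Least_le) blast
  qed
  then have "{\<xi>. \<xi> < \<alpha> \<and> rho FF m \<xi> \<alpha> \<le> k} = {\<xi>\<in>F. \<xi> < \<alpha>}" by blast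
  then show ?thesis unfolding knorm_def by simp
qed

lemma inj_knorm: "inj (knorm FF m)"
proof -
  have "knorm FF m \<alpha> \<noteq> knorm FF m \<beta>" if "\<alpha> < \<beta>" for \<alpha> \<beta>
  proof -
    obtain k F where F: "F \<in> level FF m k" "{\<alpha>, \<beta>} \<subseteq> F" using pair_in_level by blast
    have "{\<xi>\<in>F. \<xi> < \<alpha>} \<subset> {\<xi>\<in>F. \<xi> < \<beta>}" using F(2) that by auto
    then have "card {\<xi>\<in>F. \<xi> < \<alpha>} < card {\<xi>\<in>F. \<xi> < \<beta>}"
      using construction_scheme_level_finite[OF scheme F(1)] by (intro psubset_card_mono) auto
    then have "knorm FF m \<alpha> k \<noteq> knorm FF m \<beta> k" using knorm_eq_card_below[OF F(1)] F(2) by simp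
    then show ?thesis by (auto dest: fun_cong[where x = k])
  qed
  then show ?thesis by (metis injI linorder_neq_iff)
qed

lemma level_member_exists: "\<exists>F\<in>level FF m k. \<alpha> \<in> F"
proof -
  obtain B :: "'a set" where B: "finite B" "card B = m k"
    using infinite_arbitrarily_large[OF infinite_UNIV] by blast
  obtain k' F where F: "F \<in> level FF m k'" "insert \<alpha> B \<subseteq> F"
    using construction_scheme_cofinal[OF scheme, of "insert \<alpha> B"] B by auto
  have "card B \<le> card F"
    using F(2) construction_scheme_level_finite[OF scheme F(1)] by (intro card_mono) auto
  then have "m k \<le> m k'" using F(1) B levelD by fastforce
  then have "k \<le> k'" using is_type_strict_mono[OF type] by (simp add: strict_mono_less_eq)
  then show ?thesis using construction_scheme_level_down[OF scheme _ F(1)] F(2) by blast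
qed

lemma Xi_eq_intE:
  assumes l: "l \<ge> 1" and Xi: "Xi m n r FF l \<alpha> = int i"
  obtains F Fs R where "F \<in> level FF m l" "is_decomp m n r FF (l - 1) F Fs R"
    "i < n l" "\<alpha> \<in> Fs i - R"
proof -
  define P where "P = (\<lambda>x. \<exists>F\<in>level FF m l. \<alpha> \<in> F \<and>
      (\<exists>Fs R. is_decomp m n r FF (l - 1) F Fs R \<and>
         ((\<alpha> \<in> R \<and> x = -1) \<or> (\<exists>i < n l. \<alpha> \<in> Fs i - R \<and> x = int i))))"
  have "\<exists>x. P x"
  proof -
    obtain F where F: "F \<in> level FF m l" "\<alpha> \<in> F" using level_member_exists by blast
    have "F \<in> level FF m (Suc (l - 1))" using F(1) l by simp
    then obtain Fs R where d: "is_decomp m n r FF (l - 1) F Fs R"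
      using construction_scheme_decomp[OF scheme] by blast
    then obtain j where "j < n l" "\<alpha> \<in> Fs j" using F(2) l is_decompD(2)[OF d] by auto
    show ?thesis
    proof (cases "\<alpha> \<in> R")
      case True
      then have "P (-1)" unfolding P_def using F d by blast
      then show ?thesis ..
    next
      case False
      then have "P (int j)" unfolding P_def using F d \<open>j < n l\<close> \<open>\<alpha> \<in> Fs j\<close> by blast
      then show ?thesis ..
    qed
  qed
  moreover have "Xi m n r FF l \<alpha> = (SOME x. P x)" unfolding Xi_def P_def ..
  ultimately have "P (int i)" using someI_ex Xi by metis
  then show ?thesis unfolding P_def using that by auto
qed

lemma knorm_Xi:
  assumes l: "l \<ge> 1" and Xi: "Xi m n r FF l \<alpha> = int i"
  shows "knorm FF m \<alpha> l = knorm FF m \<alpha> (l - 1) + i * (m (l - 1) - r l)"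
    and "r l \<le> knorm FF m \<alpha> (l - 1)" and "knorm FF m \<alpha> (l - 1) < m (l - 1)"
proof -
  obtain F Fs R where F: "F \<in> level FF m l" and d: "is_decomp m n r FF (l - 1) F Fs R"
    and i: "i < n l" "\<alpha> \<in> Fs i - R"
    using Xi_eq_intE[OF assms] .
  have l_Suc: "Suc (l - 1) = l" using l by simp
  have n2: "n (Suc (l - 1)) \<ge> 2" using type unfolding is_type_def by blast
  have i': "i < n (Suc (l - 1))" using i(1) l_Suc by simp
  have block: "Fs i \<in> level FF m (l - 1)" and cR: "card R = r l"
    and R_less: "set_less R (Fs i - R)"
    using is_decompD(1,5)[OF d i'] is_decompD(4)[OF d] l_Suc by auto
  have "\<alpha> \<in> F" using is_decompD(2)[OF d] i' i(2) by blast
  show "knorm FF m \<alpha> l = knorm FF m \<alpha> (l - 1) + i * (m (l - 1) - r l)"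
    using decomp_card_below[OF scheme d n2 i' i(2)] knorm_eq_card_below[OF F \<open>\<alpha> \<in> F\<close>]
      knorm_eq_card_below[OF block] i(2) l_Suc by simp
  have fin: "finite (Fs i)" using construction_scheme_level_finite[OF scheme block] .
  have "R \<subseteq> {\<xi>\<in>Fs i. \<xi> < \<alpha>}"
    using decomp_root_subset[OF d n2 i'] R_less i(2) unfolding set_less_def by blast
  then show "r l \<le> knorm FF m \<alpha> (l - 1)"
    using card_mono[of "{\<xi>\<in>Fs i. \<xi> < \<alpha>}" R] fin cR knorm_eq_card_below[OF block] i(2) by simp
  have "card {\<xi>\<in>Fs i. \<xi> < \<alpha>} < card (Fs i)"
    using i(2) fin by (intro psubset_card_mono) auto
  then show "knorm FF m \<alpha> (l - 1) < m (l - 1)"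
    using knorm_eq_card_below[OF block] i(2) levelD[OF block] by simp
qed

lemma block_index_knorm:
  assumes "l \<ge> 1" "Xi m n r FF l \<alpha> = int i"
  shows "block_index m r l (knorm FF m \<alpha> l) = i"
proof -
  define q w where "q = knorm FF m \<alpha> (l - 1)" and "w = m (l - 1) - r l"
  have "r l \<le> q" "q < r l + w" "knorm FF m \<alpha> l = q + i * w"
    using knorm_Xi[OF assms] unfolding q_def w_def by auto
  then have "knorm FF m \<alpha> l - r l = (q - r l) + i * w" and "q - r l < w" by auto
  then show ?thesis unfolding block_index_def w_def[symmetric] by simp
qed

end

section \<open>Metrics on sequences of norms\<close>

definition first_diff :: "(nat \<Rightarrow> 'b) \<Rightarrow> (nat \<Rightarrow> 'b) \<Rightarrow> nat" where
  "first_diff f g = (LEAST k. f k \<noteq> g k)"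

lemma first_diff_neq: "f \<noteq> g \<Longrightarrow> f (first_diff f g) \<noteq> g (first_diff f g)"
  unfolding first_diff_def by (rule LeastI_ex) blast

lemma less_first_diff: "k < first_diff f g \<Longrightarrow> f k = g k"
  unfolding first_diff_def using not_less_Least by blast

lemma first_diff_commute: "first_diff f g = first_diff g f"
  unfolding first_diff_def by (metis (no_types, lifting))

lemma first_diff_eqI: "f k \<noteq> g k \<Longrightarrow> (\<And>j. j < k \<Longrightarrow> f j = g j) \<Longrightarrow> first_diff f g = k"
  unfolding first_diff_def by (rule Least_equality) (auto simp: not_less[symmetric])

lemma first_diff_less_trans:
  assumes "f \<noteq> g" "first_diff f g < first_diff g h"
  shows "first_diff f h = first_diff f g"
proof (rule first_diff_eqI)
  show "f (first_diff f g) \<noteq> h (first_diff f g)"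
    using first_diff_neq[OF assms(1)] less_first_diff[OF assms(2)] by simp
  show "f j = h j" if "j < first_diff f g" for j
    using less_first_diff[OF that] less_first_diff[of j g h] that assms(2) by simp
qed

lemma first_diff_min_le:
  assumes "f \<noteq> h"
  shows "min (first_diff f g) (first_diff g h) \<le> first_diff f h"
proof (rule ccontr)
  assume "\<not> ?thesis"
  then have "f (first_diff f h) = g (first_diff f h)" "g (first_diff f h) = h (first_diff f h)"
    by (auto intro: less_first_diff)
  then show False using first_diff_neq[OF assms] by simp
qed

definition scale :: "nat \<Rightarrow> real" where
  "scale k = 1 / fact (Suc k)"

lemma scale_pos: "scale k > 0"
  unfolding scale_def by simp

lemma scale_mult_Suc_le:
  assumes "a < e"
  shows "scale e * Suc e \<le> scale a"
proof -
  have "scale e * Suc e = 1 / fact e"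
    unfolding scale_def by (simp add: fact_Suc del: of_nat_Suc)
  also have "\<dots> \<le> 1 / fact (Suc a)"
    using fact_mono[of "Suc a" e] assms by (intro divide_left_mono) (auto simp: fact_gt_zero)
  finally show ?thesis unfolding scale_def .
qed

definition seq_dist :: "(nat \<Rightarrow> nat \<Rightarrow> nat \<Rightarrow> real) \<Rightarrow> (nat \<Rightarrow> nat) \<Rightarrow> (nat \<Rightarrow> nat) \<Rightarrow> real" where
  "seq_dist G f g = (if f = g then 0 else let k = first_diff f g in scale k * G k (f k) (g k))"

locale level_distance =
  fixes G :: "nat \<Rightarrow> nat \<Rightarrow> nat \<Rightarrow> real"
  assumes ge_1: "1 \<le> G k p q"
    and le_Suc: "G k p q \<le> Suc k"
    and commute: "G k p q = G k q p"
    and triangle: "G k p s \<le> G k p q + G k q s"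
begin

lemma seq_dist_neq:
  "f \<noteq> g \<Longrightarrow> seq_dist G f g = scale (first_diff f g) * G (first_diff f g) (f (first_diff f g)) (g (first_diff f g))"
  unfolding seq_dist_def Let_def by simp

lemma seq_dist_ge_scale: "f \<noteq> g \<Longrightarrow> scale (first_diff f g) \<le> seq_dist G f g"
  using seq_dist_neq mult_left_mono[OF ge_1 less_imp_le[OF scale_pos]] by simp

lemma seq_dist_le_scale: "f \<noteq> g \<Longrightarrow> seq_dist G f g \<le> scale (first_diff f g) * Suc (first_diff f g)"
  using seq_dist_neq mult_left_mono[OF le_Suc less_imp_le[OF scale_pos]] by simp

lemma seq_dist_nonneg: "0 \<le> seq_dist G f g"
  using seq_dist_ge_scale[of f g] scale_pos[of "first_diff f g"] by (cases "f = g") (auto simp: seq_dist_def)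

lemma seq_dist_commute: "seq_dist G f g = seq_dist G g f"
  unfolding seq_dist_def Let_def by (auto simp: first_diff_commute commute)

lemma seq_dist_eq_if_first_diff_less:
  assumes "f \<noteq> g" "first_diff f g < first_diff g h"
  shows "seq_dist G f h = seq_dist G f g"
proof -
  have fh: "first_diff f h = first_diff f g" using first_diff_less_trans[OF assms] .
  have "g (first_diff f g) = h (first_diff f g)" using less_first_diff[OF assms(2)] .
  moreover have "f \<noteq> h" using first_diff_neq[OF assms(1)] calculation by auto
  ultimately show ?thesis using seq_dist_neq[OF assms(1)] seq_dist_neq[of f h] fh by simp
qed

lemma seq_dist_triangle: "seq_dist G f h \<le> seq_dist G f g + seq_dist G g h"
proof (cases "f = g \<or> g = h \<or> f = h")
  case True
  then show ?thesis using seq_dist_nonneg[of f g] seq_dist_nonneg[of g h]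
    by (auto simp: seq_dist_def)
next
  case False
  then have fg: "f \<noteq> g" and gh: "g \<noteq> h" and fh: "f \<noteq> h" by auto
  define a b e where "a = first_diff f g" and "b = first_diff g h" and "e = first_diff f h"
  consider "a < b" | "b < a" | "a = b" "a < e" | "a = b" "e = a"
    using first_diff_min_le[OF fh, of g] a_def b_def e_def by linarith
  then show ?thesis
  proof cases
    case 1
    then show ?thesis
      using seq_dist_eq_if_first_diff_less[OF fg] seq_dist_nonneg[of g h] a_def b_def by simp
  next
    case 2
    then have "seq_dist G h f = seq_dist G h g"
      using seq_dist_eq_if_first_diff_less[of h g f] gh a_def b_def by (simp add: first_diff_commute)
    then have "seq_dist G f h = seq_dist G g h" by (simp add: seq_dist_commute)
    then show ?thesis using seq_dist_nonneg[of f g] by simp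
  next
    case 3
    have "seq_dist G f h \<le> scale e * Suc e" using seq_dist_le_scale[OF fh] e_def by simp
    also have "\<dots> \<le> scale a" using scale_mult_Suc_le[OF \<open>a < e\<close>] .
    also have "\<dots> \<le> seq_dist G f g" using seq_dist_ge_scale[OF fg] a_def by simp
    finally show ?thesis using seq_dist_nonneg[of g h] by simp
  next
    case 4
    have "scale e * G e (f e) (h e) \<le> scale e * (G e (f e) (g e) + G e (g e) (h e))"
      using triangle scale_pos by (intro mult_left_mono) (auto intro: less_imp_le)
    then show ?thesis using seq_dist_neq[OF fg] seq_dist_neq[OF gh] seq_dist_neq[OF fh] 4 a_def b_def e_def
      by (simp add: distrib_left)
  qed
qed

lemma is_metric_seq_dist: "is_metric (seq_dist G)"
  unfolding is_metric_def
proof (intro conjI allI)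
  fix f g
  show "seq_dist G f g = 0 \<longleftrightarrow> f = g"
    using seq_dist_ge_scale[of f g] scale_pos[of "first_diff f g"] by (auto simp: seq_dist_def)
qed (auto simp: seq_dist_nonneg seq_dist_commute seq_dist_triangle)

end

lemma is_metric_inj_comp:
  assumes "is_metric d" "inj f"
  shows "is_metric (\<lambda>x y. d (f x) (f y))"
  using assms unfolding is_metric_def inj_def by metis

definition cyclic_dist :: "nat \<Rightarrow> nat \<Rightarrow> nat \<Rightarrow> real" where
  "cyclic_dist N t t' = min \<bar>real t - real t'\<bar> (real N - \<bar>real t - real t'\<bar>)"

lemma cyclic_dist_commute: "cyclic_dist N t t' = cyclic_dist N t' t"
  unfolding cyclic_dist_def by (simp add: abs_minus_commute)

lemma cyclic_dist_nonneg: "t < N \<Longrightarrow> t' < N \<Longrightarrow> 0 \<le> cyclic_dist N t t'"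
  unfolding cyclic_dist_def by (simp add: abs_if)

lemma cyclic_dist_triangle:
  "t < N \<Longrightarrow> t' < N \<Longrightarrow> t'' < N \<Longrightarrow> cyclic_dist N t t'' \<le> cyclic_dist N t t' + cyclic_dist N t' t''"
  unfolding cyclic_dist_def min_def abs_if by (auto split: if_splits)

lemma min_triangle:
  fixes M x y z :: real
  assumes "0 \<le> M" "0 \<le> y" "0 \<le> z" "x \<le> y + z"
  shows "min M x \<le> min M y + min M z"
  using assms by (simp add: min_def)

lemma max_triangle:
  fixes M x y z :: real
  assumes "0 \<le> M" "0 \<le> y" "0 \<le> z" "x \<le> y + z"
  shows "max M x \<le> max M y + max M z"
  using assms by (simp add: max_def)

definition block_dist :: "nat \<Rightarrow> nat \<Rightarrow> nat \<Rightarrow> real" where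
  "block_dist k b b' =
     (let a = fst (prod_decode b) in
      if a = fst (prod_decode b')
      then min (Suc k) (cyclic_dist (Suc a) (snd (prod_decode b) mod Suc a) (snd (prod_decode b') mod Suc a))
      else Suc k)"

lemma block_dist_prod_encode:
  "t \<le> a \<Longrightarrow> t' \<le> a \<Longrightarrow> block_dist k (prod_encode (a, t)) (prod_encode (a, t')) = min (Suc k) (cyclic_dist (Suc a) t t')"
  unfolding block_dist_def by simp

lemma block_dist_commute: "block_dist k b b' = block_dist k b' b"
  unfolding block_dist_def Let_def by (simp add: cyclic_dist_commute)

lemma block_dist_bounds: "0 \<le> block_dist k b b' \<and> block_dist k b b' \<le> Suc k"
  unfolding block_dist_def Let_def by (auto intro: cyclic_dist_nonneg)

lemma block_dist_triangle: "block_dist k b b'' \<le> block_dist k b b' + block_dist k b' b''"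
proof (cases "fst (prod_decode b) = fst (prod_decode b') \<and> fst (prod_decode b') = fst (prod_decode b'')")
  case True
  define N where "N = Suc (fst (prod_decode b))"
  define pos where "pos x = snd (prod_decode x) mod N" for x
  have "pos x < N" for x unfolding pos_def N_def by simp
  then have "min (Suc k) (cyclic_dist N (pos b) (pos b''))
      \<le> min (Suc k) (cyclic_dist N (pos b) (pos b')) + min (Suc k) (cyclic_dist N (pos b') (pos b''))"
    by (intro min_triangle cyclic_dist_nonneg cyclic_dist_triangle) auto
  then show ?thesis using True unfolding block_dist_def Let_def N_def pos_def by simp
next
  case False
  then have "block_dist k b b' = Suc k \<or> block_dist k b' b'' = Suc k"
    unfolding block_dist_def Let_def by auto
  then show ?thesis
    using block_dist_bounds[of k b b''] block_dist_bounds[of k b b'] block_dist_bounds[of k b' b'']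
    by linarith
qed

definition level_dist :: "(nat \<Rightarrow> nat) \<Rightarrow> (nat \<Rightarrow> nat) \<Rightarrow> nat \<Rightarrow> nat \<Rightarrow> nat \<Rightarrow> real" where
  "level_dist m r k p q = max 1 (block_dist k (block_index m r k p) (block_index m r k q))"

interpretation level_dist: level_distance "level_dist m r"
proof
  fix k p q s
  show "1 \<le> level_dist m r k p q" "level_dist m r k p q \<le> Suc k"
    unfolding level_dist_def using block_dist_bounds by auto
  show "level_dist m r k p q = level_dist m r k q p"
    unfolding level_dist_def by (simp add: block_dist_commute)
  show "level_dist m r k p s \<le> level_dist m r k p q + level_dist m r k q s"
    unfolding level_dist_def using block_dist_bounds
    by (intro max_triangle block_dist_triangle) auto
qed

definition scheme_metric :: "'a::ord set set \<Rightarrow> (nat \<Rightarrow> nat) \<Rightarrow> (nat \<Rightarrow> nat) \<Rightarrow> 'a \<Rightarrow> 'a \<Rightarrow> real" where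
  "scheme_metric FF m r x y = seq_dist (level_dist m r) (knorm FF m x) (knorm FF m y)"

context infinite_construction_scheme
begin

lemma scheme_metric_commute: "scheme_metric FF m r x y = scheme_metric FF m r y x"
  unfolding scheme_metric_def by (rule level_dist.seq_dist_commute)

lemma is_metric_scheme_metric: "is_metric (scheme_metric FF m r)"
  unfolding scheme_metric_def by (rule is_metric_inj_comp[OF level_dist.is_metric_seq_dist inj_knorm])

lemma scheme_metric_captured:
  assumes "x \<noteq> y" "l \<ge> 1" "Delta FF m x y = enat l"
    and "Xi m n r FF l x = int i" "Xi m n r FF l y = int j"
  shows "scheme_metric FF m r x y = scale l * max 1 (block_dist l i j)"
proof -
  have "first_diff (knorm FF m x) (knorm FF m y) = l"
    using assms(3) unfolding Delta_def first_diff_def by (auto split: if_splits)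
  moreover have "knorm FF m x \<noteq> knorm FF m y" using inj_knorm assms(1) by (auto dest: injD)
  ultimately show ?thesis
    using block_index_knorm[OF assms(2,4)] block_index_knorm[OF assms(2,5)]
    unfolding scheme_metric_def by (simp add: level_dist.seq_dist_neq level_dist_def)
qed

end

section \<open>Monotone orders\<close>

locale monotone_order =
  fixes d :: "'b \<Rightarrow> 'b \<Rightarrow> real" and Y :: "'b set" and ord :: "'b rel" and c :: real
  assumes linear: "linear_order_on Y ord"
    and monotone: "\<forall>x\<in>Y. \<forall>y\<in>Y. \<forall>z\<in>Y. (x, y) \<in> ord \<and> x \<noteq> y \<and> (y, z) \<in> ord \<and> y \<noteq> z \<longrightarrow>
        d x y \<le> c * d x z"
    and dist_commute: "d x y = d y x"
begin

definition between :: "'b \<Rightarrow> 'b \<Rightarrow> 'b \<Rightarrow> bool" where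
  "between x z y \<longleftrightarrow> (x, z) \<in> ord \<and> (z, y) \<in> ord \<or> (y, z) \<in> ord \<and> (z, x) \<in> ord"

lemma between_commute: "between x z y \<longleftrightarrow> between y z x"
  unfolding between_def by blast

lemma ord_antisym: "(x, y) \<in> ord \<Longrightarrow> (y, x) \<in> ord \<Longrightarrow> x = y"
  using linear unfolding linear_order_on_def partial_order_on_def antisym_def by blast

lemma ord_total: "x \<in> Y \<Longrightarrow> y \<in> Y \<Longrightarrow> x \<noteq> y \<Longrightarrow> (x, y) \<in> ord \<or> (y, x) \<in> ord"
  using linear unfolding linear_order_on_def total_on_def by blast

lemma between_dist:
  assumes "x \<in> Y" "y \<in> Y" "z \<in> Y" "z \<noteq> x" "z \<noteq> y" "between x z y"
  shows "d x z \<le> c * d x y \<or> d y z \<le> c * d x y"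
proof (cases "(x, z) \<in> ord \<and> (z, y) \<in> ord")
  case True
  then show ?thesis using assms monotone by blast
next
  case False
  then have "(y, z) \<in> ord \<and> (z, x) \<in> ord" using assms(6) unfolding between_def by blast
  then show ?thesis using assms monotone dist_commute[of x y] by metis
qed

lemma between_along_path:
  assumes "\<forall>s\<le>k. p s \<in> Y \<and> p s \<noteq> z" "z \<in> Y" "between (p 0) z (p k)"
  shows "\<exists>s<k. between (p s) z (p (Suc s))"
  using assms
proof (induction k)
  case 0
  then show ?case unfolding between_def using ord_antisym by blast
next
  case (Suc k)
  show ?case
  proof (cases "between (p 0) z (p k)")
    case True
    moreover have "\<forall>s\<le>k. p s \<in> Y \<and> p s \<noteq> z" using Suc.prems(1) by simp
    ultimately obtain s where "s < k" "between (p s) z (p (Suc s))" using Suc.IH Suc.prems(2) by blast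
    then show ?thesis using less_SucI by blast
  next
    case False
    have "p k \<in> Y" "p k \<noteq> z" using Suc.prems(1) by simp_all
    then have "(p k, z) \<in> ord \<or> (z, p k) \<in> ord" using Suc.prems(2) ord_total by blast
    then have "between (p k) z (p (Suc k))"
      using False Suc.prems(3) unfolding between_def by blast
    then show ?thesis by blast
  qed
qed

lemma not_between_along_path:
  assumes "\<forall>s\<le>k. p s \<in> Y \<and> p s \<noteq> z \<and> c * e < d (p s) z"
    and "\<forall>s<k. d (p s) (p (Suc s)) = e" and "z \<in> Y"
  shows "\<not> between (p 0) z (p k)"
proof
  assume "between (p 0) z (p k)"
  then obtain s where s: "s < k" "between (p s) z (p (Suc s))"
    using between_along_path assms by blast
  have "p s \<in> Y \<and> p s \<noteq> z \<and> c * e < d (p s) z"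
    "p (Suc s) \<in> Y \<and> p (Suc s) \<noteq> z \<and> c * e < d (p (Suc s)) z"
    "d (p s) (p (Suc s)) = e"
    using assms(1,2) s(1) by (simp_all add: Suc_le_eq)
  then show False using between_dist[OF _ _ \<open>z \<in> Y\<close> _ _ s(2)] by fastforce
qed

lemma three_points_between:
  assumes "x \<in> Y" "y \<in> Y" "z \<in> Y" "x \<noteq> y" "y \<noteq> z" "x \<noteq> z"
  shows "between y x z \<or> between x y z \<or> between x z y"
proof -
  have "(x, y) \<in> ord \<or> (y, x) \<in> ord" "(y, z) \<in> ord \<or> (z, y) \<in> ord" "(x, z) \<in> ord \<or> (z, x) \<in> ord"
    using assms ord_total by blast+
  then show ?thesis unfolding between_def by blast
qed

lemma no_cyclic_configuration:
  fixes A :: nat and P :: "nat \<Rightarrow> 'b"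
  assumes "1 \<le> A" "c < A" "c < M" "1 \<le> M" "0 < s"
    and inj: "inj_on P {..<3 * A}" and in_Y: "\<forall>t < 3 * A. P t \<in> Y"
    and dist: "\<And>t t'. t < 3 * A \<Longrightarrow> t' < 3 * A \<Longrightarrow> t \<noteq> t' \<Longrightarrow>
        d (P t) (P t') = s * max 1 (min M (cyclic_dist (3 * A) t t'))"
  shows False
proof -
  have arc: "\<not> between (P (q 0)) (P z) (P (q A))"
    if q: "\<forall>t\<le>A. q t < 3 * A \<and> q t \<noteq> z \<and> A \<le> cyclic_dist (3 * A) (q t) z"
      "\<forall>t<A. q t \<noteq> q (Suc t) \<and> cyclic_dist (3 * A) (q t) (q (Suc t)) = 1"
      and z: "z < 3 * A" for q z
  proof (rule not_between_along_path)
    show "\<forall>t\<le>A. P (q t) \<in> Y \<and> P (q t) \<noteq> P z \<and> c * s < d (P (q t)) (P z)"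
    proof (intro allI impI conjI)
      fix t assume "t \<le> A"
      with q z show "P (q t) \<in> Y" "P (q t) \<noteq> P z" using in_Y inj_onD[OF inj] by auto
      have "c < max 1 (min M (cyclic_dist (3 * A) (q t) z))"
        using q \<open>t \<le> A\<close> assms(2,3) by force
      then show "c * s < d (P (q t)) (P z)"
        using dist[of "q t" z] q \<open>t \<le> A\<close> z \<open>0 < s\<close> by (simp add: mult.commute)
    qed
    show "\<forall>t<A. d (P (q t)) (P (q (Suc t))) = s"
      using dist q \<open>1 \<le> M\<close> by simp
  qed (use in_Y z in blast)
  txt \<open>The arcs \<open>0..A\<close>, \<open>A..2A\<close> and \<open>2A..3A\<close> (the last one closing up at \<open>0\<close>) avoid the
    points \<open>2A\<close>, \<open>0\<close> and \<open>A\<close>, respectively.\<close>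
  have "\<not> between (P ((\<lambda>t. t) 0)) (P (2 * A)) (P ((\<lambda>t. t) A))"
    by (rule arc) (use \<open>1 \<le> A\<close> in \<open>auto simp: cyclic_dist_def min_def abs_if split: if_splits\<close>)
  moreover have "\<not> between (P ((\<lambda>t. A + t) 0)) (P 0) (P ((\<lambda>t. A + t) A))"
    by (rule arc) (use \<open>1 \<le> A\<close> in \<open>auto simp: cyclic_dist_def min_def abs_if split: if_splits\<close>)
  moreover have "\<not> between (P ((\<lambda>t. if t < A then 2 * A + t else 0) 0)) (P A)
      (P ((\<lambda>t. if t < A then 2 * A + t else 0) A))"
    by (rule arc) (use \<open>1 \<le> A\<close> in \<open>auto simp: cyclic_dist_def min_def abs_if split: if_splits\<close>)
  moreover have "P 0 \<in> Y" "P A \<in> Y" "P (2 * A) \<in> Y" using in_Y \<open>1 \<le> A\<close> by auto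
  moreover have "P 0 \<noteq> P A" "P A \<noteq> P (2 * A)" "P 0 \<noteq> P (2 * A)"
    using inj_onD[OF inj] \<open>1 \<le> A\<close> by fastforce+
  ultimately show False
    using three_points_between[of "P 0" "P A" "P (2 * A)"] between_commute \<open>1 \<le> A\<close> by (simp add: mult_2)
qed

end

section \<open>Capturing cycles in uncountable sets\<close>

lemma prod_encode_mono_snd: "t \<le> t' \<Longrightarrow> prod_encode (a, t) \<le> prod_encode (a, t')"
proof -
  assume "t \<le> t'"
  then have "triangle (a + t) \<le> triangle (a + t')"
    unfolding triangle_def by (intro div_le_mono mult_le_mono) auto
  then show ?thesis using \<open>t \<le> t'\<close> unfolding prod_encode_def by simp
qed

lemma captured_singletons:
  fixes FF :: "'a::linorder set set"
  assumes "n_capturing m n r FF nn" "\<not> countable Y"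
  obtains l y where "A \<le> l" "1 \<le> l" "\<forall>i < nn. y i \<in> Y" "inj_on y {..<nn}"
    "\<forall>i < nn. Xi m n r FF l (y i) = int i"
    "\<forall>i j. i < j \<and> j < nn \<longrightarrow> Delta FF m (y i) (y j) = enat l"
proof -
  define S where "S = (\<lambda>y. {y}) ` Y"
  have "\<not> countable S"
  proof
    assume "countable S"
    then have "countable Y"
      unfolding S_def by (rule countable_image_inj_on) (simp add: inj_on_def)
    then show False using assms(2) by simp
  qed
  moreover have "S \<subseteq> {A. A \<noteq> {} \<and> finite A}" unfolding S_def by auto
  ultimately have "infinite {l. \<exists>D. inj_on D {..<nn} \<and> (\<forall>i < nn. D i \<in> S) \<and>
      rtt_system nn D \<and> delta_captured m n r FF l nn D}"
    using assms(1) unfolding n_capturing_def by simp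
  then obtain l D where "A \<le> l" and D: "inj_on D {..<nn}" "\<forall>i < nn. D i \<in> S"
    "rtt_system nn D" "delta_captured m n r FF l nn D"
    unfolding infinite_nat_iff_unbounded_le by blast
  define y where "y i = the_elem (D i)" for i
  have Dy: "D i = {y i}" "y i \<in> Y" if "i < nn" for i
    using D(2) that unfolding S_def y_def by auto
  have "nn \<ge> 2" using D(3) unfolding rtt_system_def by simp
  have y_inj: "inj_on y {..<nn}"
  proof (rule inj_onI)
    fix i j assume "i \<in> {..<nn}" "j \<in> {..<nn}" "y i = y j"
    then show "i = j" using inj_onD[OF D(1)] Dy by (metis lessThan_iff)
  qed
  have "y 0 \<noteq> y 1" using inj_onD[OF y_inj, of 0 1] \<open>nn \<ge> 2\<close> by auto
  then have card: "card (D 0) = 1" "card (D 0 \<inter> D 1) = 0"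
    using Dy(1)[of 0] Dy(1)[of 1] \<open>nn \<ge> 2\<close> by auto
  have nth: "nth_elem (D i) 0 = y i" if "i < nn" for i
    using Dy[OF that] unfolding nth_elem_def by simp
  have "1 \<le> l" and Xi: "\<forall>i < nn. Xi m n r FF l (nth_elem (D i) 0) = int i"
    and Delta: "\<forall>i j. i < j \<and> j < nn \<longrightarrow> Delta FF m (nth_elem (D i) 0) (nth_elem (D j) 0) = enat l"
    using D(4) unfolding delta_captured_def Let_def card by simp_all
  show ?thesis
  proof (rule that[OF \<open>A \<le> l\<close> \<open>1 \<le> l\<close> _ y_inj])
    show "\<forall>i < nn. y i \<in> Y" using Dy(2) by blast
    show "\<forall>i < nn. Xi m n r FF l (y i) = int i" using Xi nth by simp
    show "\<forall>i j. i < j \<and> j < nn \<longrightarrow> Delta FF m (y i) (y j) = enat l" using Delta nth by simp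
  qed
qed

context infinite_construction_scheme
begin

lemma uncountable_contains_cycle:
  assumes "capturing m n r FF" "\<not> countable Y" "1 \<le> A"
  obtains l P where "A \<le> l" "inj_on P {..<3 * A}" "\<forall>t < 3 * A. P t \<in> Y"
    "\<And>t t'. t < 3 * A \<Longrightarrow> t' < 3 * A \<Longrightarrow> t \<noteq> t' \<Longrightarrow>
       scheme_metric FF m r (P t) (P t') = scale l * max 1 (min (Suc l) (cyclic_dist (3 * A) t t'))"
proof -
  define a where "a = 3 * A - 1"
  define nn where "nn = Suc (prod_encode (a, a))"
  have "Suc a = 3 * A" unfolding a_def using \<open>1 \<le> A\<close> by simp
  have "n_capturing m n r FF nn"
    using assms(1) le_prod_encode_1[of a a] \<open>1 \<le> A\<close> unfolding capturing_def nn_def a_def by simp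
  then obtain l y where "A \<le> l" "1 \<le> l" and y: "\<forall>i < nn. y i \<in> Y" "inj_on y {..<nn}"
    "\<forall>i < nn. Xi m n r FF l (y i) = int i"
    "\<forall>i j. i < j \<and> j < nn \<longrightarrow> Delta FF m (y i) (y j) = enat l"
    by (rule captured_singletons[OF _ assms(2)])
  have y_dist_less: "scheme_metric FF m r (y i) (y j) = scale l * max 1 (block_dist l i j)"
    if "i < j" "j < nn" for i j
  proof (rule scheme_metric_captured[OF _ \<open>1 \<le> l\<close>])
    show "y i \<noteq> y j" using inj_onD[OF y(2), of i j] that by auto
  qed (use y(3,4) that in simp_all)
  have y_dist: "scheme_metric FF m r (y i) (y j) = scale l * max 1 (block_dist l i j)"
    if "i < nn" "j < nn" "i \<noteq> j" for i j
  proof (cases "i < j")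
    case False
    then have "j < i" using that(3) by simp
    then show ?thesis
      using y_dist_less[of j i] that(1) scheme_metric_commute block_dist_commute by simp
  qed (use y_dist_less that in simp)
  define P where "P t = y (prod_encode (a, t))" for t
  have encode: "prod_encode (a, t) < nn" if "t < 3 * A" for t
    using prod_encode_mono_snd[of t a a] that \<open>Suc a = 3 * A\<close> unfolding nn_def by simp
  show ?thesis
  proof (rule that[OF \<open>A \<le> l\<close>])
    show "inj_on P {..<3 * A}"
    proof (rule inj_onI)
      fix t t' assume "t \<in> {..<3 * A}" "t' \<in> {..<3 * A}" "P t = P t'"
      then have "prod_encode (a, t) = prod_encode (a, t')"
        using inj_onD[OF y(2)] encode unfolding P_def by (metis lessThan_iff)
      then show "t = t'" by simp
    qed
    show "\<forall>t < 3 * A. P t \<in> Y" using y(1) encode unfolding P_def by blast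
    fix t t' assume t: "t < 3 * A" "t' < 3 * A" "t \<noteq> t'"
    then have "t \<le> a" "t' \<le> a" using \<open>Suc a = 3 * A\<close> by linarith+
    then have "block_dist l (prod_encode (a, t)) (prod_encode (a, t')) = min (Suc l) (cyclic_dist (3 * A) t t')"
      using block_dist_prod_encode \<open>Suc a = 3 * A\<close> by metis
    then show "scheme_metric FF m r (P t) (P t') = scale l * max 1 (min (Suc l) (cyclic_dist (3 * A) t t'))"
      using y_dist encode t unfolding P_def by simp
  qed
qed

lemma not_monotone_space_if_uncountable:
  assumes "capturing m n r FF" "\<not> countable Y"
  shows "\<not> monotone_space (scheme_metric FF m r) Y"
proof
  assume "monotone_space (scheme_metric FF m r) Y"
  then obtain c ord where "linear_order_on Y ord"
    and "\<forall>x\<in>Y. \<forall>y\<in>Y. \<forall>z\<in>Y. (x, y) \<in> ord \<and> x \<noteq> y \<and> (y, z) \<in> ord \<and> y \<noteq> z \<longrightarrow>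
       scheme_metric FF m r x y \<le> c * scheme_metric FF m r x z"
    unfolding monotone_space_def c_monotone_def by blast
  then interpret monotone_order "scheme_metric FF m r" Y ord c
    using scheme_metric_commute by unfold_locales
  define A where "A = nat \<lceil>c\<rceil> + 1"
  have "1 \<le> A" "c < A" unfolding A_def by linarith+
  then obtain l P where "A \<le> l" "inj_on P {..<3 * A}" "\<forall>t < 3 * A. P t \<in> Y"
    "\<And>t t'. t < 3 * A \<Longrightarrow> t' < 3 * A \<Longrightarrow> t \<noteq> t' \<Longrightarrow>
       scheme_metric FF m r (P t) (P t') = scale l * max 1 (min (Suc l) (cyclic_dist (3 * A) t t'))"
    using uncountable_contains_cycle[OF assms] by blast
  then show False
    using no_cyclic_configuration[of A "Suc l" "scale l" P] \<open>1 \<le> A\<close> \<open>c < A\<close> scale_pos by simp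
qed

end

definition tau_n :: "nat \<Rightarrow> nat" where
  "tau_n k = Suc k"

definition tau_r :: "nat \<Rightarrow> nat" where
  "tau_r k = (case k of 0 \<Rightarrow> 0 | Suc j \<Rightarrow> fst (prod_decode j))"

primrec tau_m :: "nat \<Rightarrow> nat" where
  "tau_m 0 = 1"
| "tau_m (Suc k) = tau_r (Suc k) + (tau_m k - tau_r (Suc k)) * tau_n (Suc k)"

lemma tau_r_le: "tau_r (Suc k) \<le> k"
  using le_prod_encode_1[of "fst (prod_decode k)" "snd (prod_decode k)"] unfolding tau_r_def by simp

lemma tau_m_ge: "Suc k \<le> tau_m k"
proof (induction k)
  case (Suc k)
  have "tau_r (Suc k) < tau_m k" using tau_r_le[of k] Suc.IH by simp
  then have "tau_m k - tau_r (Suc k) \<ge> 1" by simp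
  then have "(tau_m k - tau_r (Suc k)) * tau_n (Suc k) \<ge> tau_m k - tau_r (Suc k) + 1"
    unfolding tau_n_def by simp
  then show ?case using Suc.IH \<open>tau_r (Suc k) < tau_m k\<close> by simp
qed simp

lemma good_type_tau: "good_type tau_m tau_n tau_r"
  unfolding good_type_def
proof (intro conjI allI)
  have "tau_r (Suc k) < tau_m k" for k
    using tau_r_le[of k] tau_m_ge[of k] by linarith
  then show "is_type tau_m tau_n tau_r"
    unfolding is_type_def by (simp add: tau_n_def)
next
  fix x
  have "range (\<lambda>b. Suc (prod_encode (x, b))) \<subseteq> {k. k \<ge> 1 \<and> tau_r k = x}"
    unfolding tau_r_def by auto
  moreover have "infinite (range (\<lambda>b. Suc (prod_encode (x, b))))"
    by (rule range_inj_infinite) (auto simp: inj_def)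
  ultimately show "infinite {k. k \<ge> 1 \<and> tau_r k = x}" using infinite_super by blast
qed

theorem mainTheorem15:
  assumes "omega1_like TYPE('a::wellorder)"
    and "CA_Delta TYPE('a)"
  shows "\<exists>d :: 'a \<Rightarrow> 'a \<Rightarrow> real. is_metric d \<and>
           (\<forall>Y. \<not> countable Y \<longrightarrow> \<not> monotone_space d Y)"
proof -
  have "mono (\<lambda>k. tau_n (Suc k))" unfolding tau_n_def mono_def by simp
  moreover have "\<forall>b. \<exists>k. tau_n (Suc k) > b" unfolding tau_n_def by (metis lessI less_SucI)
  ultimately obtain FF :: "'a set set"
    where "construction_scheme tau_m tau_n tau_r UNIV FF" "capturing tau_m tau_n tau_r FF"
    using assms(2) good_type_tau unfolding CA_Delta_def by blast
  moreover have "infinite (UNIV :: 'a set)"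
    using assms(1) countable_finite unfolding omega1_like_def by blast
  ultimately interpret infinite_construction_scheme tau_m tau_n tau_r FF
    using good_type_tau unfolding good_type_def by unfold_locales blast+
  show ?thesis
    using is_metric_scheme_metric not_monotone_space_if_uncountable \<open>capturing tau_m tau_n tau_r FF\<close>
    by blast
qed

end
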